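(* Let $H$ be an infinite-dimensional (not necessarily separable) Hilbert space and let $\mathcal{T}\subseteq B_1$. For $T\in\mathcal{T}$ define $\psi_T:B_1\to B_1$ by $\psi_T(A)=TA$. Then $\mathcal{T}$, regarded as a family of maps $H_1\to H_1$, is uniformly equicontinuous (UEC) if and only if the family $\{\psi_T\}_{T\in\mathcal{T}}$ of maps $B_1\to B_1$ is UEC.
   Context: $H_1$ is the closed unit ball of $H$ and $B_1$ the closed unit ball of $B(H)$. $H_1$ carries the (weak) uniformity whose basic entourages are the sets $\{(x,y)\in H_1\times H_1: |\langle x-y,z_i\rangle|<\epsilon,\ i=1,\dots,N\}$ with $z_i\in H_1$, $N\in\mathbb{N}$, $\epsilon>0$; $B_1$ carries the (weak operator) uniformity whose basic entourages are the sets $\{(A,B)\in B_1\times B_1: |\langle (A-B)w_i,z_i\rangle|<\epsilon,\ i=1,\dots,N\}$ with $w_i,z_i\in H_1$, $N\in\mathbb{N}$, $\epsilon>0$. A family $\mathcal{F}$ of maps from a uniform space $X$ to itself is uniformly equicontinuous (UEC) if for every entourage $U$ there is an entourage $W$ such that $(x,y)\in W$ implies $(f(x),f(y))\in U$ for all $f\in\mathcal{F}$. *)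

theory Defs
  imports "HOL-Analysis.Analysis"
begin

class chilbert = banach +
  fixes scaleC :: "complex \<Rightarrow> 'a \<Rightarrow> 'a"
    and cinner :: "'a \<Rightarrow> 'a \<Rightarrow> complex"
  assumes scaleC_of_real: "scaleC (complex_of_real r) x = scaleR r x"
    and scaleC_add_right: "scaleC a (x + y) = scaleC a x + scaleC a y"
    and scaleC_add_left: "scaleC (a + b) x = scaleC a x + scaleC b x"
    and scaleC_scaleC: "scaleC a (scaleC b x) = scaleC (a * b) x"
    and cinner_add_left: "cinner (x + y) z = cinner x z + cinner y z"
    and cinner_scaleC_left: "cinner (scaleC c x) y = c * cinner x y"
    and cinner_commute: "cinner x y = cnj (cinner y x)"
    and cinner_self: "cinner x x = complex_of_real ((norm x)\<^sup>2)"

definition infinite_dimensional :: "'a::chilbert itself \<Rightarrow> bool" where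
  "infinite_dimensional _ \<longleftrightarrow>
     \<not> (\<exists>S::'a set. finite S \<and> (\<forall>x. \<exists>c. x = (\<Sum>s\<in>S. scaleC (c s) s)))"

definition H1 :: "'a::chilbert set" where
  "H1 = {x. norm x \<le> 1}"

definition B1 :: "('a::chilbert \<Rightarrow> 'a) set" where
  "B1 = {A. (\<forall>x y. A (x + y) = A x + A y) \<and> (\<forall>c x. A (scaleC c x) = scaleC c (A x))
            \<and> (\<forall>x. norm (A x) \<le> norm x)}"

definition weak_basic :: "'a::chilbert set \<Rightarrow> real \<Rightarrow> ('a \<times> 'a) set" where
  "weak_basic Z \<epsilon> = {(x, y). x \<in> H1 \<and> y \<in> H1 \<and> (\<forall>z\<in>Z. cmod (cinner (x - y) z) < \<epsilon>)}"

definition weak_entourage :: "('a::chilbert \<times> 'a) set \<Rightarrow> bool" where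
  "weak_entourage U \<longleftrightarrow> U \<subseteq> H1 \<times> H1 \<and>
     (\<exists>Z \<epsilon>. finite Z \<and> Z \<subseteq> H1 \<and> \<epsilon> > 0 \<and> weak_basic Z \<epsilon> \<subseteq> U)"

definition wot_basic :: "('a::chilbert \<times> 'a) set \<Rightarrow> real \<Rightarrow> (('a \<Rightarrow> 'a) \<times> ('a \<Rightarrow> 'a)) set" where
  "wot_basic P \<epsilon> = {(A, B). A \<in> B1 \<and> B \<in> B1 \<and>
      (\<forall>(w, z)\<in>P. cmod (cinner (A w - B w) z) < \<epsilon>)}"

definition wot_entourage :: "(('a::chilbert \<Rightarrow> 'a) \<times> ('a \<Rightarrow> 'a)) set \<Rightarrow> bool" where
  "wot_entourage U \<longleftrightarrow> U \<subseteq> B1 \<times> B1 \<and>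
     (\<exists>P \<epsilon>. finite P \<and> P \<subseteq> H1 \<times> H1 \<and> \<epsilon> > 0 \<and> wot_basic P \<epsilon> \<subseteq> U)"

definition UEC :: "(('b \<times> 'b) set \<Rightarrow> bool) \<Rightarrow> ('b \<Rightarrow> 'b) set \<Rightarrow> bool" where
  "UEC ent F \<longleftrightarrow> (\<forall>U. ent U \<longrightarrow>
     (\<exists>W. ent W \<and> (\<forall>f\<in>F. \<forall>x y. (x, y) \<in> W \<longrightarrow> (f x, f y) \<in> U)))"

definition psi :: "('a \<Rightarrow> 'a) \<Rightarrow> ('a \<Rightarrow> 'a) \<Rightarrow> ('a \<Rightarrow> 'a)" where
  "psi T A = T \<circ> A"

end

theory Submission
  imports Defs
begin

text \<open>
  Proof idea.  Both uniformities have a base of "basic" entourages, so uniform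
  equicontinuity can be checked on basic entourages alone (lemma UEC_basis).

  (\<Rightarrow>) If the operators in \<T> are weakly UEC, left multiplication by them is UEC for
  the weak operator uniformity: weak-operator closeness of A, B at finitely many
  vectors w means weak closeness of A w, B w, which \<T> preserves (evaluation lemma
  wot_basic_eval).

  (\<Leftarrow>) Conversely fix a unit vector e and embed H_1 into B_1 by the rank-one
  operators R x = <_, e> x.  Weakly close x, y give weak-operator close R x, R y;
  the operators T (R x), T (R y) are then weak-operator close, and evaluating at e
  recovers the weak closeness of T x, T y.
\<close>

lemma scaleC_diff_right: "scaleC a (x - y) = scaleC a x - scaleC a (y::'a::chilbert)"
  using scaleC_add_right[of a "x - y" y] by (simp add: algebra_simps)

lemma cinner_diff_left: "cinner (x - y) z = cinner x z - cinner (y::'a::chilbert) z"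
  using cinner_add_left[of "x - y" y z] by (simp add: algebra_simps)

lemma cinner_add_right: "cinner x (y + z) = cinner x y + cinner (x::'a::chilbert) z"
  by (metis cinner_add_left cinner_commute complex_cnj_add)

lemma cinner_scaleC_right: "cinner x (scaleC c y) = cnj c * cinner (x::'a::chilbert) y"
  by (metis cinner_commute cinner_scaleC_left complex_cnj_mult)

lemma scaleC_one: "scaleC 1 (x::'a::chilbert) = x"
  by (metis scaleC_of_real of_real_1 scaleR_one)

text \<open>Cauchy--Schwarz against a unit vector, via the orthogonal decomposition
  v = r + <v, e> e with r orthogonal to e.\<close>
lemma cinner_unit_bound:
  fixes v e :: "'a::chilbert"
  assumes "norm e = 1"
  shows "cmod (cinner v e) \<le> norm v"
proof -
  define c where "c = cinner v e"
  define r where "r = v - scaleC c e"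
  have ee: "cinner e e = 1" using assms cinner_self[of e] by simp
  have re: "cinner r e = 0" unfolding r_def cinner_diff_left cinner_scaleC_left ee c_def by simp
  have er: "cinner e r = 0" using re cinner_commute[of e r] by simp
  have v: "v = r + scaleC c e" unfolding r_def by simp
  have "cinner v v = cinner r r + c * cnj c"
    unfolding v cinner_add_left cinner_add_right cinner_scaleC_left cinner_scaleC_right re er ee
    by simp
  also have "\<dots> = complex_of_real ((norm r)\<^sup>2 + (cmod c)\<^sup>2)"
    by (simp add: cinner_self complex_norm_square[symmetric] del: of_real_power)
  finally have "complex_of_real ((norm v)\<^sup>2) = complex_of_real ((norm r)\<^sup>2 + (cmod c)\<^sup>2)"
    by (simp add: cinner_self)
  then have "(norm v)\<^sup>2 = (norm r)\<^sup>2 + (cmod c)\<^sup>2" using of_real_eq_iff by blast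
  then have "(cmod c)\<^sup>2 \<le> (norm v)\<^sup>2" by simp
  then show ?thesis unfolding c_def by (rule power2_le_imp_le) simp
qed

lemma norm_scaleC: "norm (scaleC c (x::'a::chilbert)) = cmod c * norm x"
proof -
  have "cinner (scaleC c x) (scaleC c x) = c * cnj c * cinner x x"
    by (simp add: cinner_scaleC_left cinner_scaleC_right mult.assoc)
  then have "complex_of_real ((norm (scaleC c x))\<^sup>2)
      = complex_of_real ((cmod c)\<^sup>2) * complex_of_real ((norm x)\<^sup>2)"
    by (simp only: cinner_self complex_norm_square)
  also have "\<dots> = complex_of_real ((cmod c * norm x)\<^sup>2)"
    by (simp add: power_mult_distrib)
  finally have "(norm (scaleC c x))\<^sup>2 = (cmod c * norm x)\<^sup>2" using of_real_eq_iff by blast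
  then show ?thesis by (rule power2_eq_imp_eq) simp_all
qed

lemma infinite_dimensional_unit_vector:
  assumes "infinite_dimensional TYPE('a)"
  obtains e :: "'a::chilbert" where "norm e = 1"
proof -
  have "\<exists>x0::'a. x0 \<noteq> 0"
  proof (rule ccontr)
    assume "\<nexists>x0::'a. x0 \<noteq> 0"
    then have "\<forall>x::'a. \<exists>c. x = (\<Sum>s\<in>{}. scaleC (c s) s)" by simp
    then show False using assms unfolding infinite_dimensional_def by blast
  qed
  then obtain x0 :: 'a where "x0 \<noteq> 0" by blast
  then have "norm (scaleR (1 / norm x0) x0) = 1" by simp
  then show ?thesis by (rule that)
qed

lemma B1_comp: "T \<in> B1 \<Longrightarrow> A \<in> B1 \<Longrightarrow> T \<circ> A \<in> B1"
  unfolding B1_def by (auto intro: order_trans)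

lemma B1_H1: "A \<in> B1 \<Longrightarrow> w \<in> H1 \<Longrightarrow> A w \<in> H1"
  unfolding B1_def H1_def by (auto intro: order_trans)

definition rank_one :: "'a::chilbert \<Rightarrow> 'a \<Rightarrow> 'a \<Rightarrow> 'a" where
  "rank_one e x = (\<lambda>v. scaleC (cinner v e) x)"

lemma rank_one_B1:
  assumes "x \<in> H1" "norm e = 1"
  shows "rank_one e x \<in> B1"
proof -
  have "norm (scaleC (cinner v e) x) \<le> norm v" for v
  proof -
    have "norm (scaleC (cinner v e) x) = cmod (cinner v e) * norm x" by (rule norm_scaleC)
    also have "\<dots> \<le> norm v * 1"
      using cinner_unit_bound[OF assms(2), of v] assms(1) unfolding H1_def
      by (intro mult_mono) auto
    finally show ?thesis by simp
  qed
  then show ?thesis unfolding B1_def rank_one_def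
    by (auto simp: cinner_add_left scaleC_add_left cinner_scaleC_left scaleC_scaleC)
qed

lemma rank_one_at_unit: "norm e = 1 \<Longrightarrow> rank_one e x e = x"
  unfolding rank_one_def using cinner_self[of e] by (simp add: scaleC_one)

definition maps_close :: "('b \<Rightarrow> 'b) set \<Rightarrow> ('b \<times> 'b) set \<Rightarrow> ('b \<times> 'b) set \<Rightarrow> bool" where
  "maps_close F W U \<longleftrightarrow> (\<forall>f\<in>F. \<forall>x y. (x, y) \<in> W \<longrightarrow> (f x, f y) \<in> U)"

lemma maps_close_mono: "maps_close F W U \<Longrightarrow> V \<subseteq> W \<Longrightarrow> U \<subseteq> U' \<Longrightarrow> maps_close F V U'"
  unfolding maps_close_def by blast

lemma UEC_basis:
  assumes ent: "\<And>U. ent U \<longleftrightarrow> U \<subseteq> S \<times> S \<and> (\<exists>i\<in>I. basic i \<subseteq> U)"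
    and basic_sub: "\<And>i. i \<in> I \<Longrightarrow> basic i \<subseteq> S \<times> S"
  shows "UEC ent F \<longleftrightarrow> (\<forall>i\<in>I. \<exists>j\<in>I. maps_close F (basic j) (basic i))"
proof -
  have basic_ent: "ent (basic i)" if "i \<in> I" for i
    using ent[of "basic i"] basic_sub[OF that] that by blast
  have "UEC ent F \<longleftrightarrow> (\<forall>U. ent U \<longrightarrow> (\<exists>W. ent W \<and> maps_close F W U))"
    unfolding UEC_def maps_close_def ..
  also have "\<dots> \<longleftrightarrow> (\<forall>i\<in>I. \<exists>j\<in>I. maps_close F (basic j) (basic i))"
  proof
    assume uec: "\<forall>U. ent U \<longrightarrow> (\<exists>W. ent W \<and> maps_close F W U)"
    show "\<forall>i\<in>I. \<exists>j\<in>I. maps_close F (basic j) (basic i)"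
    proof
      fix i assume "i \<in> I"
      then obtain W where W: "ent W" "maps_close F W (basic i)" using uec basic_ent by blast
      then obtain j where "j \<in> I" "basic j \<subseteq> W" using ent[of W] by blast
      then show "\<exists>j\<in>I. maps_close F (basic j) (basic i)"
        using maps_close_mono[OF W(2)] by blast
    qed
  next
    assume base: "\<forall>i\<in>I. \<exists>j\<in>I. maps_close F (basic j) (basic i)"
    show "\<forall>U. ent U \<longrightarrow> (\<exists>W. ent W \<and> maps_close F W U)"
    proof (intro allI impI)
      fix U assume "ent U"
      then obtain i where "i \<in> I" "basic i \<subseteq> U" using ent[of U] by blast
      with base obtain j where "j \<in> I" "maps_close F (basic j) (basic i)" by blast
      then show "\<exists>W. ent W \<and> maps_close F W U"
        using basic_ent maps_close_mono[OF _ order_refl \<open>basic i \<subseteq> U\<close>] by blast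
    qed
  qed
  finally show ?thesis .
qed

lemma UEC_weak_iff:
  "UEC weak_entourage F \<longleftrightarrow>
    (\<forall>Z \<epsilon>. finite Z \<and> Z \<subseteq> H1 \<and> \<epsilon> > 0 \<longrightarrow>
      (\<exists>Z' \<epsilon>'. finite Z' \<and> Z' \<subseteq> H1 \<and> \<epsilon>' > 0 \<and> maps_close F (weak_basic Z' \<epsilon>') (weak_basic Z \<epsilon>)))"
proof -
  let ?I = "{(Z, \<epsilon>). finite Z \<and> Z \<subseteq> (H1::'a set) \<and> \<epsilon> > (0::real)}"
  have "UEC weak_entourage F \<longleftrightarrow>
      (\<forall>i\<in>?I. \<exists>j\<in>?I. maps_close F (case_prod weak_basic j) (case_prod weak_basic i))"
    by (rule UEC_basis) (auto simp: weak_entourage_def weak_basic_def)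
  then show ?thesis by auto
qed

lemma UEC_wot_iff:
  "UEC wot_entourage F \<longleftrightarrow>
    (\<forall>P \<epsilon>. finite P \<and> P \<subseteq> H1 \<times> H1 \<and> \<epsilon> > 0 \<longrightarrow>
      (\<exists>P' \<epsilon>'. finite P' \<and> P' \<subseteq> H1 \<times> H1 \<and> \<epsilon>' > 0 \<and> maps_close F (wot_basic P' \<epsilon>') (wot_basic P \<epsilon>)))"
proof -
  let ?I = "{(P, \<epsilon>). finite P \<and> P \<subseteq> (H1::'a set) \<times> H1 \<and> \<epsilon> > (0::real)}"
  have "UEC wot_entourage F \<longleftrightarrow>
      (\<forall>i\<in>?I. \<exists>j\<in>?I. maps_close F (case_prod wot_basic j) (case_prod wot_basic i))"
    by (rule UEC_basis) (auto simp: wot_entourage_def wot_basic_def)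
  then show ?thesis by auto
qed

lemma wot_basic_eval:
  assumes "(A, B) \<in> wot_basic (W \<times> Z) \<epsilon>" "w \<in> W" "W \<subseteq> H1"
  shows "(A w, B w) \<in> weak_basic Z \<epsilon>"
  using assms B1_H1 unfolding wot_basic_def weak_basic_def by blast

text \<open>The rank-one embedding carries weak closeness against the second components of P to
  weak-operator closeness against P, since |<w, e>| \<le> 1 for w in H_1.\<close>
lemma rank_one_wot_basic:
  assumes e: "norm e = 1" and P: "P \<subseteq> H1 \<times> H1" and xy: "(x, y) \<in> weak_basic (snd ` P) \<epsilon>"
  shows "(rank_one e x, rank_one e y) \<in> wot_basic P \<epsilon>"
proof -
  have xyH: "x \<in> H1" "y \<in> H1" using xy unfolding weak_basic_def by auto
  have "cmod (cinner (rank_one e x w - rank_one e y w) z) < \<epsilon>" if wz: "(w, z) \<in> P" for w z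
  proof -
    have "norm w \<le> 1" using wz P unfolding H1_def by auto
    then have w_e: "cmod (cinner w e) \<le> 1" using cinner_unit_bound[OF e, of w] by simp
    have "z \<in> snd ` P" using wz by force
    then have xy_z: "cmod (cinner (x - y) z) < \<epsilon>" using xy unfolding weak_basic_def by auto
    have "cinner (rank_one e x w - rank_one e y w) z = cinner w e * cinner (x - y) z"
      unfolding rank_one_def scaleC_diff_right[symmetric] cinner_scaleC_left ..
    then have "cmod (cinner (rank_one e x w - rank_one e y w) z)
        = cmod (cinner w e) * cmod (cinner (x - y) z)"
      by (simp add: norm_mult)
    also have "\<dots> \<le> cmod (cinner (x - y) z)"
      using w_e by (simp add: mult_left_le_one_le)
    finally show ?thesis using xy_z by linarith
  qed
  then show ?thesis
    using rank_one_B1[OF _ e] xyH unfolding wot_basic_def by auto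
qed

text \<open>(\<Rightarrow>) Weak UEC of \<T> gives weak-operator UEC of left multiplication: test A, B at the
  first components of P against the witnesses supplied for the second components.\<close>
lemma UEC_left_mult:
  fixes \<T> :: "('a::chilbert \<Rightarrow> 'a) set"
  assumes "\<T> \<subseteq> B1" and uec: "UEC weak_entourage \<T>"
  shows "UEC wot_entourage (psi ` \<T>)"
  unfolding UEC_wot_iff
proof (intro allI impI)
  fix P :: "('a \<times> 'a) set" and \<epsilon> :: real
  assume P: "finite P \<and> P \<subseteq> H1 \<times> H1 \<and> \<epsilon> > 0"
  then have "finite (snd ` P) \<and> snd ` P \<subseteq> H1 \<and> \<epsilon> > 0" by auto
  then obtain Z' \<epsilon>' where Z': "finite Z'" "Z' \<subseteq> H1" "\<epsilon>' > 0"
    and close: "maps_close \<T> (weak_basic Z' \<epsilon>') (weak_basic (snd ` P) \<epsilon>)"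
    using uec[unfolded UEC_weak_iff, rule_format, of "snd ` P" \<epsilon>] by blast
  have "(psi T A, psi T B) \<in> wot_basic P \<epsilon>"
    if T: "T \<in> \<T>" and AB: "(A, B) \<in> wot_basic (fst ` P \<times> Z') \<epsilon>'" for T A B
  proof -
    have "cmod (cinner (T (A w) - T (B w)) z) < \<epsilon>" if wz: "(w, z) \<in> P" for w z
    proof -
      have "(A w, B w) \<in> weak_basic Z' \<epsilon>'"
        using wot_basic_eval[OF AB] wz P by force
      then have "(T (A w), T (B w)) \<in> weak_basic (snd ` P) \<epsilon>"
        using close T unfolding maps_close_def by blast
      then show ?thesis using wz unfolding weak_basic_def by force
    qed
    moreover have "psi T A \<in> B1" "psi T B \<in> B1"
      using AB T assms(1) B1_comp unfolding wot_basic_def psi_def by blast+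
    ultimately show ?thesis unfolding wot_basic_def psi_def by auto
  qed
  then have "maps_close (psi ` \<T>) (wot_basic (fst ` P \<times> Z') \<epsilon>') (wot_basic P \<epsilon>)"
    unfolding maps_close_def by blast
  moreover have "finite (fst ` P \<times> Z')" "fst ` P \<times> Z' \<subseteq> H1 \<times> H1" using P Z' by auto
  ultimately show "\<exists>P' \<epsilon>'. finite P' \<and> P' \<subseteq> H1 \<times> H1 \<and> \<epsilon>' > 0 \<and>
      maps_close (psi ` \<T>) (wot_basic P' \<epsilon>') (wot_basic P \<epsilon>)"
    using Z'(3) by blast
qed

text \<open>(\<Leftarrow>) Weak-operator UEC of left multiplication gives weak UEC of \<T>: pass through the
  rank-one embedding along a unit vector e and evaluate at e.\<close>
lemma UEC_of_UEC_left_mult: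
  fixes \<T> :: "('a::chilbert \<Rightarrow> 'a) set" and e :: 'a
  assumes "\<T> \<subseteq> B1" and e: "norm e = 1"
    and uec: "UEC wot_entourage (psi ` \<T>)"
  shows "UEC weak_entourage \<T>"
  unfolding UEC_weak_iff
proof (intro allI impI)
  fix Z :: "'a set" and \<epsilon> :: real
  assume Z: "finite Z \<and> Z \<subseteq> H1 \<and> \<epsilon> > 0"
  have eH: "e \<in> H1" using e unfolding H1_def by simp
  have "finite ({e} \<times> Z) \<and> {e} \<times> Z \<subseteq> H1 \<times> H1 \<and> \<epsilon> > 0" using Z eH by auto
  then obtain P' \<epsilon>' where P': "finite P'" "P' \<subseteq> H1 \<times> H1" "\<epsilon>' > 0"
    and close: "maps_close (psi ` \<T>) (wot_basic P' \<epsilon>') (wot_basic ({e} \<times> Z) \<epsilon>)"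
    using uec[unfolded UEC_wot_iff, rule_format, of "{e} \<times> Z" \<epsilon>] by blast
  have "(T x, T y) \<in> weak_basic Z \<epsilon>"
    if T: "T \<in> \<T>" and xy: "(x, y) \<in> weak_basic (snd ` P') \<epsilon>'" for T x y
  proof -
    have "(rank_one e x, rank_one e y) \<in> wot_basic P' \<epsilon>'"
      using rank_one_wot_basic[OF e P'(2) xy] .
    then have "(psi T (rank_one e x), psi T (rank_one e y)) \<in> wot_basic ({e} \<times> Z) \<epsilon>"
      using close T unfolding maps_close_def by blast
    then have "(psi T (rank_one e x) e, psi T (rank_one e y) e) \<in> weak_basic Z \<epsilon>"
      using wot_basic_eval eH by blast
    then show ?thesis unfolding psi_def by (simp add: rank_one_at_unit[OF e])
  qed
  then have "maps_close \<T> (weak_basic (snd ` P') \<epsilon>') (weak_basic Z \<epsilon>)"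
    unfolding maps_close_def by blast
  moreover have "finite (snd ` P')" "snd ` P' \<subseteq> H1" using P' by auto
  ultimately show "\<exists>Z' \<epsilon>'. finite Z' \<and> Z' \<subseteq> H1 \<and> \<epsilon>' > 0 \<and>
      maps_close \<T> (weak_basic Z' \<epsilon>') (weak_basic Z \<epsilon>)"
    using P'(3) by blast
qed

theorem proposition1:
  fixes \<T> :: "('a::chilbert \<Rightarrow> 'a) set"
  assumes "infinite_dimensional TYPE('a)"
    and "\<T> \<subseteq> B1"
  shows "UEC weak_entourage \<T> \<longleftrightarrow> UEC wot_entourage (psi ` \<T>)"
proof -
  obtain e :: 'a where "norm e = 1"
    using infinite_dimensional_unit_vector[OF assms(1)] .
  then show ?thesis
    using UEC_left_mult[OF assms(2)] UEC_of_UEC_left_mult[OF assms(2)] by blast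
qed

end
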